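(* Let $\mathcal U\subset\mathbb C$ be a neighborhood and $L(x,\partial)$ an $r$th order differential operator with coefficients analytic on $\mathcal U$. Let $\mathcal V\subset\mathbb C$ be open and $\psi_1(x,z),\dots,\psi_r(x,z)$ functions analytic on $\mathcal U\times\mathcal V$ such that (i) $L(\psi_i)=z\psi_i$ for $i=1,\dots,r$, and (ii) for every $\lambda\in\mathcal V$ the functions $\psi_1(x,\lambda),\dots,\psi_r(x,\lambda)$ of $x$ are linearly independent. Let $\mathcal O(\mathcal U)$ be the space of analytic functions on $\mathcal U$ and $\mathcal S(\mathcal V)\subset\mathcal S$ the space of finitely supported distributions with support in $\mathcal V$. Then the linear map $\mathcal S(\mathcal V)^r\to\mathcal O(\mathcal U)$, $(c_1,\dots,c_r)\mapsto\sum_i c_i(\psi_i)$, is injective.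
   Context: $\mathcal S$ denotes the space of finitely supported distributions in the $z$-plane: finite linear combinations of $\delta_\lambda\circ\partial_z^j$ ($\lambda\in\mathbb C$, $j\ge0$), where $\delta_\lambda$ evaluates its argument at $z=\lambda$; applied to a function $\psi(x,z)$ such a distribution acts in the $z$ variable and yields a function of $x$. The support of such a distribution is the set of points $\lambda$ occurring with nonzero coefficient. *)

theory Defs
  imports "HOL-Complex_Analysis.Complex_Analysis" "HOL-Library.FuncSet"
begin

text \<open>A finitely supported distribution in the z-plane is represented by its coefficient
function c, where c lam j is the coefficient of delta_lam composed with d^j/dz^j.\<close>

definition fsupp_dist :: "(complex \<Rightarrow> nat \<Rightarrow> complex) \<Rightarrow> bool" where
  "fsupp_dist c \<longleftrightarrow> finite {(lam, j). c lam j \<noteq> 0}"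

definition dist_support :: "(complex \<Rightarrow> nat \<Rightarrow> complex) \<Rightarrow> complex set" where
  "dist_support c = {lam. \<exists>j. c lam j \<noteq> 0}"

definition dist_space :: "complex set \<Rightarrow> (complex \<Rightarrow> nat \<Rightarrow> complex) set" where
  "dist_space V = {c. fsupp_dist c \<and> dist_support c \<subseteq> V}"

definition dist_apply :: "(complex \<Rightarrow> nat \<Rightarrow> complex) \<Rightarrow> (complex \<Rightarrow> complex \<Rightarrow> complex)
    \<Rightarrow> complex \<Rightarrow> complex" where
  "dist_apply c psi x = (\<Sum>(lam, j)\<in>{(lam, j). c lam j \<noteq> 0}. c lam j * (deriv ^^ j) (psi x) lam)"

text \<open>Analytic (holomorphic) function of two complex variables on U x V:
jointly continuous and holomorphic in each variable separately (Osgood).\<close>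
definition holomorphic2_on :: "(complex \<Rightarrow> complex \<Rightarrow> complex) \<Rightarrow> complex set \<Rightarrow> complex set \<Rightarrow> bool" where
  "holomorphic2_on f U V \<longleftrightarrow> continuous_on (U \<times> V) (\<lambda>(x, z). f x z)
     \<and> (\<forall>z\<in>V. (\<lambda>x. f x z) holomorphic_on U) \<and> (\<forall>x\<in>U. (\<lambda>z. f x z) holomorphic_on V)"

definition diff_op :: "nat \<Rightarrow> (nat \<Rightarrow> complex \<Rightarrow> complex) \<Rightarrow> (complex \<Rightarrow> complex) \<Rightarrow> complex \<Rightarrow> complex" where
  "diff_op r a g x = (\<Sum>k\<le>r. a k x * (deriv ^^ k) g x)"

end

theory Submission
  imports Defs
begin

text \<open>
  Put \<open>\<Phi> i j = \<partial>\<^sub>z\<^sup>j \<psi>\<^sub>i\<close>. Since \<open>\<partial>\<^sub>z\<close> commutes with \<open>L\<close>, differentiating \<open>L \<psi>\<^sub>i = z \<psi>\<^sub>i\<close>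
  \<open>j\<close> times in \<open>z\<close> gives \<open>(L - \<lambda>) \<Phi> i j (\<cdot>, \<lambda>) = j \<Phi> i (j - 1) (\<cdot>, \<lambda>)\<close>: for every \<open>\<lambda>\<close>
  the functions \<open>\<Phi> i j (\<cdot>, \<lambda>)\<close> form Jordan chains of \<open>L\<close> with eigenvalue \<open>\<lambda>\<close>, and
  \<open>\<Sum>\<^sub>i c\<^sub>i(\<psi>\<^sub>i)\<close> is a finite combination of them. If such a combination vanishes, apply
  \<open>L - \<mu>\<close> for an eigenvalue \<open>\<mu>\<close> occurring in it: this shortens the chains at \<open>\<mu>\<close> and keeps
  the others, so by induction on the total length the transformed coefficients vanish. Read
  backwards, this kills all coefficients except those of \<open>\<Phi> i 0 (\<cdot>, \<mu>) = \<psi>\<^sub>i(\<cdot>, \<mu>)\<close>, which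
  vanish by linear independence.

  The analytic input is that \<open>\<partial>\<^sub>z\<close> commutes with \<open>\<partial>\<^sub>x\<close> for functions that are jointly
  continuous and separately holomorphic: Cauchy's formula writes \<open>\<partial>\<^sub>x \<psi>\<close> as an integral over a
  circle in the \<open>x\<close>-plane, which can be differentiated under the integral sign in \<open>z\<close>.
\<close>

section \<open>Partial derivatives of separately holomorphic functions\<close>

definition deriv_x :: "(complex \<Rightarrow> complex \<Rightarrow> complex) \<Rightarrow> complex \<Rightarrow> complex \<Rightarrow> complex" where
  "deriv_x F x z = deriv (\<lambda>y. F y z) x"

definition deriv_z :: "(complex \<Rightarrow> complex \<Rightarrow> complex) \<Rightarrow> complex \<Rightarrow> complex \<Rightarrow> complex" where
  "deriv_z F x z = deriv (F x) z"

lemma deriv_z_eq_deriv_x_swap: "deriv_z F x z = deriv_x (\<lambda>a b. F b a) z x"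
  by (simp add: deriv_x_def deriv_z_def)

lemma holomorphic2_on_swap: "holomorphic2_on F U V \<Longrightarrow> holomorphic2_on (\<lambda>a b. F b a) V U"
  unfolding holomorphic2_on_def using continuous_on_swap_args by auto

lemma has_field_derivative_deriv_z:
  assumes "holomorphic2_on G U V" "open V" "x \<in> U" "z \<in> V"
  shows "(G x has_field_derivative deriv_z G x z) (at z)"
  unfolding deriv_z_def using assms by (intro holomorphic_derivI[of _ V]) (auto simp: holomorphic2_on_def)

lemma norm_circlepath_minus_center: "norm (circlepath c \<rho> t - c) = \<bar>\<rho>\<bar>"
  by (simp add: circlepath norm_mult)

lemma circlepath_in_cball: "\<rho> \<ge> 0 \<Longrightarrow> circlepath c \<rho> t \<in> cball c \<rho>"
  using norm_circlepath_minus_center[of c \<rho> t] by (simp add: dist_norm norm_minus_commute)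

lemma circlepath_minus_ne_0:
  assumes "x \<in> ball c \<rho>" shows "circlepath c \<rho> t - x \<noteq> 0"
proof
  assume "circlepath c \<rho> t - x = 0"
  then show False
    using assms norm_circlepath_minus_center[of c \<rho> t] by (simp add: dist_norm norm_minus_commute)
qed

lemma continuous_on_circlepath: "continuous_on A (circlepath c \<rho>)"
  unfolding circlepath by (intro continuous_intros)

definition circle_deriv_kernel :: "complex \<Rightarrow> real \<Rightarrow> complex \<Rightarrow> real \<Rightarrow> complex" where
  "circle_deriv_kernel c \<rho> x t =
     vector_derivative (circlepath c \<rho>) (at t) / (circlepath c \<rho> t - x)\<^sup>2 / (2 * of_real pi * \<i>)"

lemma continuous_on_circle_deriv_kernel:
  assumes g: "continuous_on S g" "g ` S \<subseteq> ball c \<rho>"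
  shows "continuous_on (S \<times> A) (\<lambda>(p, t). circle_deriv_kernel c \<rho> (g p) t)"
proof -
  have "continuous_on (S \<times> A) (\<lambda>q. circlepath c \<rho> (snd q))"
    by (rule continuous_on_compose2[OF continuous_on_circlepath continuous_on_snd]) auto
  moreover have "continuous_on (S \<times> A) (\<lambda>q. g (fst q))"
    by (rule continuous_on_compose2[OF g(1) continuous_on_fst]) auto
  ultimately have "continuous_on (S \<times> A) (\<lambda>q. (circlepath c \<rho> (snd q) - g (fst q))\<^sup>2)"
    by (intro continuous_on_power continuous_on_diff)
  moreover have "continuous_on (S \<times> A) (\<lambda>q. vector_derivative (circlepath c \<rho>) (at (snd q)))"
    unfolding vector_derivative_circlepath by (intro continuous_intros)
  ultimately show ?thesis
    unfolding circle_deriv_kernel_def case_prod_unfold using g(2)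
    by (intro continuous_on_divide continuous_on_const) (force dest: circlepath_minus_ne_0)+
qed

lemma deriv_eq_integral_circle_deriv_kernel:
  assumes hol: "G holomorphic_on U" and sub: "cball c \<rho> \<subseteq> U" and x: "x \<in> ball c \<rho>"
  shows "deriv G x = integral (cbox 0 1) (\<lambda>t. G (circlepath c \<rho> t) * circle_deriv_kernel c \<rho> x t)"
proof -
  have "(G has_field_derivative
      1 / (2 * of_real pi * \<i>) * contour_integral (circlepath c \<rho>) (\<lambda>u. G u / (u - x)\<^sup>2)) (at x)"
    using hol sub x
    by (intro Cauchy_derivative_integral_circlepath(2))
       (meson holomorphic_on_imp_continuous_on holomorphic_on_subset ball_subset_cball order_trans)+
  then have "deriv G x = 1 / (2 * of_real pi * \<i>) *
      integral {0..1} (\<lambda>t. G (circlepath c \<rho> t) / (circlepath c \<rho> t - x)\<^sup>2 *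
        vector_derivative (circlepath c \<rho>) (at t))"
    unfolding contour_integral_integral by (rule DERIV_imp_deriv)
  also have "\<dots> = integral {0..1} (\<lambda>t. 1 / (2 * of_real pi * \<i>) *
      (G (circlepath c \<rho> t) / (circlepath c \<rho> t - x)\<^sup>2 * vector_derivative (circlepath c \<rho>) (at t)))"
    by (rule integral_mult_right[symmetric])
  also have "\<dots> = integral (cbox 0 1) (\<lambda>t. G (circlepath c \<rho> t) * circle_deriv_kernel c \<rho> x t)"
    unfolding circle_deriv_kernel_def cbox_interval
    by (intro arg_cong[where f="integral _"] ext) (simp only: divide_inverse mult_ac mult_1)
  finally show ?thesis .
qed

lemma continuous_on_circlepath_param:
  assumes F: "continuous_on (U \<times> V) (\<lambda>(x, z). F x z)" and sub: "cball c \<rho> \<subseteq> U" and \<rho>: "\<rho> \<ge> 0"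
    and g: "continuous_on S g" "g ` S \<subseteq> V"
  shows "continuous_on (S \<times> A) (\<lambda>(p, t). F (circlepath c \<rho> t) (g p))"
proof -
  have "continuous_on (S \<times> A) ((\<lambda>(x, z). F x z) \<circ> (\<lambda>(p, t). (circlepath c \<rho> t, g p)))"
  proof (rule continuous_on_compose)
    show "continuous_on (S \<times> A) (\<lambda>(p, t). (circlepath c \<rho> t, g p))"
      unfolding case_prod_unfold
      by (intro continuous_on_Pair continuous_on_compose2[OF continuous_on_circlepath continuous_on_snd]
          continuous_on_compose2[OF g(1) continuous_on_fst]) auto
    show "continuous_on ((\<lambda>(p, t). (circlepath c \<rho> t, g p)) ` (S \<times> A)) (\<lambda>(x, z). F x z)"
      by (rule continuous_on_subset[OF F]) (use sub \<rho> g(2) circlepath_in_cball in fastforce)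
  qed
  then show ?thesis by (simp add: o_def case_prod_unfold)
qed

lemma continuous_on_deriv_x:
  assumes h: "holomorphic2_on F U V" and U: "open U" and V: "open V"
  shows "continuous_on (U \<times> V) (\<lambda>(x, z). deriv_x F x z)"
proof -
  have "isCont (\<lambda>(x, z). deriv_x F x z) (x0, z0)" if x0: "x0 \<in> U" and z0: "z0 \<in> V" for x0 z0
  proof -
    obtain \<rho> where \<rho>: "\<rho> > 0" "cball x0 \<rho> \<subseteq> U"
      using U x0 open_contains_cball by blast
    have Fc: "continuous_on (U \<times> V) (\<lambda>(x, z). F x z)"
      using h by (simp add: holomorphic2_on_def)
    have "continuous_on ((ball x0 \<rho> \<times> V) \<times> cbox 0 1) (\<lambda>(p, t). F (circlepath x0 \<rho> t) (snd p))"
      by (rule continuous_on_circlepath_param[OF Fc \<rho>(2) less_imp_le[OF \<rho>(1)] continuous_on_snd]) auto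
    moreover have "continuous_on ((ball x0 \<rho> \<times> V) \<times> cbox 0 1) (\<lambda>(p, t). circle_deriv_kernel x0 \<rho> (fst p) t)"
      by (rule continuous_on_circle_deriv_kernel[OF continuous_on_fst]) auto
    ultimately have "continuous_on ((ball x0 \<rho> \<times> V) \<times> cbox 0 1)
        (\<lambda>(p, t). F (circlepath x0 \<rho> t) (snd p) * circle_deriv_kernel x0 \<rho> (fst p) t)"
      unfolding case_prod_unfold by (rule continuous_on_mult)
    then have cont: "continuous_on (ball x0 \<rho> \<times> V)
        (\<lambda>p. integral (cbox 0 1) (\<lambda>t. F (circlepath x0 \<rho> t) (snd p) * circle_deriv_kernel x0 \<rho> (fst p) t))"
      by (intro integral_continuous_on_param) (simp add: case_prod_unfold)
    have rep: "deriv_x F x z =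
        integral (cbox 0 1) (\<lambda>t. F (circlepath x0 \<rho> t) z * circle_deriv_kernel x0 \<rho> x t)"
      if "x \<in> ball x0 \<rho>" "z \<in> V" for x z
      unfolding deriv_x_def
      by (rule deriv_eq_integral_circle_deriv_kernel[OF _ \<rho>(2) that(1)]) (use h that in \<open>simp add: holomorphic2_on_def\<close>)
    have "continuous_on (ball x0 \<rho> \<times> V) (\<lambda>(x, z). deriv_x F x z)"
      by (rule continuous_on_eq[OF cont]) (auto simp: rep)
    then show ?thesis
      using \<rho>(1) z0 by (auto simp: continuous_on_eq_continuous_at[OF open_Times[OF open_ball V]])
  qed
  then show ?thesis
    by (auto simp: continuous_on_eq_continuous_at[OF open_Times[OF U V]])
qed

lemma continuous_on_deriv_z:
  assumes h: "holomorphic2_on F U V" and U: "open U" and V: "open V"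
  shows "continuous_on (U \<times> V) (\<lambda>(x, z). deriv_z F x z)"
  using continuous_on_swap_args[OF continuous_on_deriv_x[OF holomorphic2_on_swap[OF h] V U]]
  by (simp add: deriv_z_eq_deriv_x_swap)

lemma has_field_derivative_circle_integral_z:
  assumes h: "holomorphic2_on F U V" and U: "open U" and V: "open V"
    and \<rho>: "\<rho> > 0" "cball x \<rho> \<subseteq> U" and z: "z \<in> V"
  shows "((\<lambda>w. integral (cbox 0 1) (\<lambda>t. F (circlepath x \<rho> t) w * circle_deriv_kernel x \<rho> x t))
      has_field_derivative
        integral (cbox 0 1) (\<lambda>t. deriv_z F (circlepath x \<rho> t) z * circle_deriv_kernel x \<rho> x t)) (at z)"
proof -
  obtain \<epsilon> where \<epsilon>: "\<epsilon> > 0" "ball z \<epsilon> \<subseteq> V"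
    using V z open_contains_ball by blast
  have \<gamma>U: "circlepath x \<rho> t \<in> U" for t
    using \<rho> circlepath_in_cball[of \<rho> x t] by auto
  have kernel: "continuous_on (A \<times> B) (\<lambda>(p, t). circle_deriv_kernel x \<rho> x t)"
    for A :: "'a::topological_space set" and B :: "real set"
    by (rule continuous_on_circle_deriv_kernel[where g="\<lambda>_. x"]) (use \<rho>(1) in auto)
  have "((\<lambda>w. integral (cbox 0 1) (\<lambda>t. F (circlepath x \<rho> t) w * circle_deriv_kernel x \<rho> x t))
      has_field_derivative
        integral (cbox 0 1) (\<lambda>t. deriv_z F (circlepath x \<rho> t) z * circle_deriv_kernel x \<rho> x t))
      (at z within ball z \<epsilon>)"
  proof (rule leibniz_rule_field_derivative[where
        fx="\<lambda>w t. deriv_z F (circlepath x \<rho> t) w * circle_deriv_kernel x \<rho> x t"])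
    fix w t assume "w \<in> ball z \<epsilon>"
    then have "(F (circlepath x \<rho> t) has_field_derivative deriv_z F (circlepath x \<rho> t) w) (at w)"
      using \<epsilon>(2) by (intro has_field_derivative_deriv_z[OF h V \<gamma>U]) auto
    then show "((\<lambda>w. F (circlepath x \<rho> t) w * circle_deriv_kernel x \<rho> x t) has_field_derivative
        deriv_z F (circlepath x \<rho> t) w * circle_deriv_kernel x \<rho> x t) (at w within ball z \<epsilon>)"
      by (rule DERIV_cmult_right[OF has_field_derivative_at_within])
  next
    fix w assume "w \<in> ball z \<epsilon>"
    then have "(\<lambda>y. F y w) holomorphic_on U"
      using h \<epsilon>(2) by (auto simp: holomorphic2_on_def)
    then have "continuous_on (cbox 0 1) (\<lambda>t. F (circlepath x \<rho> t) w)"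
      by (intro continuous_on_compose2[OF holomorphic_on_imp_continuous_on continuous_on_circlepath])
        (use \<gamma>U in auto)
    moreover have "continuous_on (cbox 0 1) (\<lambda>t. (\<lambda>(p, t). circle_deriv_kernel x \<rho> x t) (x, t))"
      by (rule continuous_on_compose2[OF kernel continuous_on_Pair[OF continuous_on_const continuous_on_id]])
        auto
    then have "continuous_on (cbox 0 1) (\<lambda>t. circle_deriv_kernel x \<rho> x t)"
      by simp
    ultimately show "(\<lambda>t. F (circlepath x \<rho> t) w * circle_deriv_kernel x \<rho> x t) integrable_on cbox 0 1"
      by (intro integrable_continuous continuous_on_mult)
  next
    have "continuous_on (ball z \<epsilon> \<times> cbox 0 1) (\<lambda>(w, t). deriv_z F (circlepath x \<rho> t) w)"
      by (rule continuous_on_circlepath_param[OF continuous_on_deriv_z[OF h U V] \<rho>(2), where g="\<lambda>w. w"])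
        (use \<rho>(1) \<epsilon>(2) in auto)
    then show "continuous_on (ball z \<epsilon> \<times> cbox 0 1)
        (\<lambda>(w, t). deriv_z F (circlepath x \<rho> t) w * circle_deriv_kernel x \<rho> x t)"
      using kernel unfolding case_prod_unfold by (rule continuous_on_mult)
  qed (use \<epsilon> in auto)
  then show ?thesis
    by (simp only: at_within_open[OF centre_in_ball[THEN iffD2, OF \<epsilon>(1)] open_ball])
qed

lemma deriv_x_has_field_derivative_z:
  assumes h: "holomorphic2_on F U V" and U: "open U" and V: "open V"
    and \<rho>: "\<rho> > 0" "cball x \<rho> \<subseteq> U" and z: "z \<in> V"
  shows "((\<lambda>w. deriv_x F x w) has_field_derivative
           integral (cbox 0 1) (\<lambda>t. deriv_z F (circlepath x \<rho> t) z * circle_deriv_kernel x \<rho> x t)) (at z)"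
  using has_field_derivative_circle_integral_z[OF assms]
proof (rule has_field_derivative_transform_within_open[OF _ V z])
  fix w assume "w \<in> V"
  then have "(\<lambda>y. F y w) holomorphic_on U"
    using h by (simp add: holomorphic2_on_def)
  then show "integral (cbox 0 1) (\<lambda>t. F (circlepath x \<rho> t) w * circle_deriv_kernel x \<rho> x t) = deriv_x F x w"
    unfolding deriv_x_def using \<rho>(1)
    by (intro sym[OF deriv_eq_integral_circle_deriv_kernel[OF _ \<rho>(2)]]) auto
qed

lemma holomorphic2_on_deriv_x:
  assumes h: "holomorphic2_on F U V" and U: "open U" and V: "open V"
  shows "holomorphic2_on (deriv_x F) U V"
  unfolding holomorphic2_on_def
proof (intro conjI ballI)
  show "continuous_on (U \<times> V) (\<lambda>(x, z). deriv_x F x z)"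
    by (rule continuous_on_deriv_x[OF h U V])
next
  fix z assume "z \<in> V"
  then have "(\<lambda>x. F x z) holomorphic_on U"
    using h by (simp add: holomorphic2_on_def)
  then show "(\<lambda>x. deriv_x F x z) holomorphic_on U"
    unfolding deriv_x_def by (rule holomorphic_deriv[OF _ U])
next
  fix x assume "x \<in> U"
  then obtain \<rho> where "\<rho> > 0" "cball x \<rho> \<subseteq> U"
    using U open_contains_cball by blast
  then show "(\<lambda>z. deriv_x F x z) holomorphic_on V"
    unfolding holomorphic_on_open[OF V] using deriv_x_has_field_derivative_z[OF h U V] by blast
qed

lemma holomorphic2_on_deriv_z:
  assumes h: "holomorphic2_on F U V" and U: "open U" and V: "open V"
  shows "holomorphic2_on (deriv_z F) U V"
  using holomorphic2_on_swap[OF holomorphic2_on_deriv_x[OF holomorphic2_on_swap[OF h] V U]]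
  by (simp add: deriv_z_eq_deriv_x_swap[abs_def])

lemma deriv_z_deriv_x_commute:
  assumes h: "holomorphic2_on F U V" and U: "open U" and V: "open V" and x: "x \<in> U" and z: "z \<in> V"
  shows "deriv_z (deriv_x F) x z = deriv_x (deriv_z F) x z"
proof -
  obtain \<rho> where \<rho>: "\<rho> > 0" "cball x \<rho> \<subseteq> U"
    using U x open_contains_cball by blast
  have "deriv_z (deriv_x F) x z =
      integral (cbox 0 1) (\<lambda>t. deriv_z F (circlepath x \<rho> t) z * circle_deriv_kernel x \<rho> x t)"
    unfolding deriv_z_def[of "deriv_x F"]
    by (rule DERIV_imp_deriv[OF deriv_x_has_field_derivative_z[OF h U V \<rho> z]])
  also have "\<dots> = deriv_x (deriv_z F) x z"
    unfolding deriv_x_def using holomorphic2_on_deriv_z[OF h U V] z \<rho>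
    by (intro deriv_eq_integral_circle_deriv_kernel[symmetric, OF _ \<rho>(2)]) (auto simp: holomorphic2_on_def)
  finally show ?thesis .
qed

lemma holomorphic2_on_funpow_deriv_x:
  "holomorphic2_on F U V \<Longrightarrow> open U \<Longrightarrow> open V \<Longrightarrow> holomorphic2_on ((deriv_x ^^ k) F) U V"
  by (induction k) (auto intro: holomorphic2_on_deriv_x)

lemma holomorphic2_on_funpow_deriv_z:
  "holomorphic2_on F U V \<Longrightarrow> open U \<Longrightarrow> open V \<Longrightarrow> holomorphic2_on ((deriv_z ^^ j) F) U V"
  by (induction j) (auto intro: holomorphic2_on_deriv_z)

lemma funpow_deriv_x_eq_higher_deriv: "(\<lambda>y. (deriv_x ^^ k) F y z) = (deriv ^^ k) (\<lambda>y. F y z)"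
  by (induction k) (simp_all add: deriv_x_def)

lemma funpow_deriv_z_eq_higher_deriv: "(deriv_z ^^ j) F x = (deriv ^^ j) (F x)"
  by (induction j) (simp_all add: deriv_z_def)

lemma deriv_x_cong:
  assumes U: "open U" and eq: "\<And>y. y \<in> U \<Longrightarrow> G y z = H y z" and x: "x \<in> U"
  shows "deriv_x G x z = deriv_x H x z"
  unfolding deriv_x_def
  by (rule deriv_cong_ev[OF eventually_mono[OF eventually_nhds_in_open[OF U x] eq] refl])

lemma funpow_deriv_x_deriv_z_commute:
  assumes h: "holomorphic2_on F U V" and U: "open U" and V: "open V"
  shows "x \<in> U \<Longrightarrow> z \<in> V \<Longrightarrow> (deriv_x ^^ k) (deriv_z F) x z = deriv_z ((deriv_x ^^ k) F) x z"
proof (induction k arbitrary: x)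
  case (Suc k)
  have "(deriv_x ^^ Suc k) (deriv_z F) x z = deriv_x ((deriv_x ^^ k) (deriv_z F)) x z"
    by simp
  also have "\<dots> = deriv_x (deriv_z ((deriv_x ^^ k) F)) x z"
    by (rule deriv_x_cong[OF U _ Suc.prems(1)]) (rule Suc.IH[OF _ Suc.prems(2)])
  also have "\<dots> = deriv_z ((deriv_x ^^ Suc k) F) x z"
    using deriv_z_deriv_x_commute[OF holomorphic2_on_funpow_deriv_x[OF h U V] U V Suc.prems] by simp
  finally show ?case .
qed simp

lemma diff_op_deriv_z:
  assumes h: "holomorphic2_on G U V" and U: "open U" and V: "open V" and x: "x \<in> U" and z: "z \<in> V"
  shows "diff_op n a (\<lambda>y. deriv_z G y z) x = deriv (\<lambda>w. diff_op n a (\<lambda>y. G y w) x) z"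
proof -
  have diff: "(\<lambda>w. (deriv_x ^^ k) G x w) field_differentiable at z" for k
  proof -
    have "(\<lambda>w. (deriv_x ^^ k) G x w) holomorphic_on V"
      using holomorphic2_on_funpow_deriv_x[OF h U V, of k] x by (simp add: holomorphic2_on_def)
    then show ?thesis by (rule holomorphic_on_imp_differentiable_at[OF _ V z])
  qed
  have "diff_op n a (\<lambda>y. deriv_z G y z) x = (\<Sum>k\<le>n. a k x * (deriv_x ^^ k) (deriv_z G) x z)"
    unfolding diff_op_def by (simp add: fun_cong[OF funpow_deriv_x_eq_higher_deriv])
  also have "\<dots> = (\<Sum>k\<le>n. deriv (\<lambda>w. a k x * (deriv_x ^^ k) G x w) z)"
    by (intro sum.cong refl)
      (simp add: funpow_deriv_x_deriv_z_commute[OF h U V x z] deriv_z_def deriv_cmult[OF diff])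
  also have "\<dots> = deriv (\<lambda>w. \<Sum>k\<le>n. a k x * (deriv_x ^^ k) G x w) z"
    by (rule deriv_sum[symmetric]) (rule field_differentiable_mult[OF field_differentiable_const diff])
  finally show ?thesis
    by (simp add: diff_op_def fun_cong[OF funpow_deriv_x_eq_higher_deriv])
qed

lemma diff_op_funpow_deriv_z:
  assumes h: "holomorphic2_on P U V" and U: "open U" and V: "open V"
    and eigen: "\<And>x z. x \<in> U \<Longrightarrow> z \<in> V \<Longrightarrow> diff_op n a (\<lambda>y. P y z) x = z * P x z"
  shows "x \<in> U \<Longrightarrow> l \<in> V \<Longrightarrow>
    diff_op n a (\<lambda>y. (deriv_z ^^ j) P y l) x = l * (deriv_z ^^ j) P x l + of_nat j * (deriv_z ^^ (j - 1)) P x l"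
proof (induction j arbitrary: x l)
  case 0
  then show ?case using eigen by simp
next
  case (Suc j)
  note x = Suc.prems(1) and l = Suc.prems(2)
  define Q where "Q = (deriv_z ^^ j) P"
  define R where "R = (deriv_z ^^ (j - 1)) P"
  have hol: "holomorphic2_on ((deriv_z ^^ i) P) U V" for i
    by (rule holomorphic2_on_funpow_deriv_z[OF h U V])
  have dQ: "(Q x has_field_derivative deriv_z Q x l) (at l)"
    unfolding Q_def by (rule has_field_derivative_deriv_z[OF hol[of j] V x l])
  have dR: "((\<lambda>w. of_nat j * R x w) has_field_derivative of_nat j * Q x l) (at l)"
  proof (cases j)
    case (Suc m)
    have "deriv_z R x l = Q x l"
      unfolding Q_def R_def Suc by simp
    then show ?thesis
      using DERIV_cmult[OF has_field_derivative_deriv_z[OF hol[of "j - 1"] V x l], of "of_nat j"]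
      unfolding R_def by simp
  qed simp
  have "diff_op n a (\<lambda>y. (deriv_z ^^ Suc j) P y l) x = deriv (\<lambda>w. diff_op n a (\<lambda>y. Q y w) x) l"
    unfolding Q_def funpow.simps o_apply by (rule diff_op_deriv_z[OF hol[of j] U V x l])
  also have "\<dots> = deriv (\<lambda>w. w * Q x w + of_nat j * R x w) l"
  proof (rule deriv_cong_ev[OF eventually_mono[OF eventually_nhds_in_open[OF V l]] refl])
    fix w assume "w \<in> V"
    then show "diff_op n a (\<lambda>y. Q y w) x = w * Q x w + of_nat j * R x w"
      unfolding Q_def R_def by (rule Suc.IH[OF x])
  qed
  also have "\<dots> = l * deriv_z Q x l + 1 * Q x l + of_nat j * Q x l"
    by (rule DERIV_imp_deriv[OF DERIV_add[OF DERIV_mult'[OF DERIV_ident dQ] dR]])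
  finally show ?case
    unfolding Q_def by (simp add: algebra_simps)
qed

section \<open>Jordan chains of the differential operator\<close>

lemma higher_deriv_sum_cmult:
  assumes V: "open V" and z: "z \<in> V" and S: "finite S" and hol: "\<And>s. s \<in> S \<Longrightarrow> f s holomorphic_on V"
  shows "(deriv ^^ j) (\<lambda>w. \<Sum>s\<in>S. c s * f s w) z = (\<Sum>s\<in>S. c s * (deriv ^^ j) (f s) z)"
  using S hol
proof (induction S rule: finite_induct)
  case (insert s S)
  have "(deriv ^^ j) (\<lambda>w. c s * f s w + (\<Sum>s\<in>S. c s * f s w)) z =
      (deriv ^^ j) (\<lambda>w. c s * f s w) z + (deriv ^^ j) (\<lambda>w. \<Sum>s\<in>S. c s * f s w) z"
    using insert.prems by (intro higher_deriv_add[OF _ _ V z]) (auto intro!: holomorphic_intros)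
  also have "(deriv ^^ j) (\<lambda>w. c s * f s w) z = c s * (deriv ^^ j) (f s) z"
    using insert.prems by (intro higher_deriv_cmult[OF _ z V]) auto
  finally show ?case
    using insert by simp
qed simp

lemma diff_op_sum_cmult:
  assumes U: "open U" and x: "x \<in> U" and S: "finite S" and hol: "\<And>s. s \<in> S \<Longrightarrow> f s holomorphic_on U"
  shows "diff_op n a (\<lambda>y. \<Sum>s\<in>S. c s * f s y) x = (\<Sum>s\<in>S. c s * diff_op n a (f s) x)"
  unfolding diff_op_def
  by (simp add: higher_deriv_sum_cmult[OF U x S hol] sum_distrib_left sum.swap[of _ S] mult_ac)

lemma diff_op_eq_0:
  assumes U: "open U" and x: "x \<in> U" and g: "\<And>y. y \<in> U \<Longrightarrow> g y = 0"
  shows "diff_op n a g x = 0"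
proof -
  have "(deriv ^^ k) g x = (deriv ^^ k) (\<lambda>_. 0) x" for k
    by (rule higher_deriv_cong_ev[OF eventually_mono[OF eventually_nhds_in_open[OF U x] g] refl])
  then show ?thesis
    by (simp add: diff_op_def)
qed

lemma eq_0_by_descent:
  fixes f :: "nat \<Rightarrow> 'a::zero"
  assumes "\<And>j. j \<ge> B \<Longrightarrow> f j = 0" and "\<And>j. f (Suc j) = 0 \<Longrightarrow> f j = 0"
  shows "f j = 0"
proof -
  have "j \<le> max j B" by simp
  then show ?thesis
  proof (induction rule: inc_induct)
    case base
    then show ?case using assms(1) by simp
  next
    case (step k)
    then show ?case using assms(2) by blast
  qed
qed

lemma sum_lessThan_of_nat_pred_shift:
  fixes d \<phi> :: "nat \<Rightarrow> 'a::comm_semiring_1"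
  assumes "d B = 0"
  shows "(\<Sum>j<B. of_nat j * d j * \<phi> (j - 1)) = (\<Sum>j<B. of_nat (Suc j) * d (Suc j) * \<phi> j)"
proof (cases B)
  case (Suc B')
  have "(\<Sum>j<B. of_nat j * d j * \<phi> (j - 1)) = (\<Sum>j<B'. of_nat (Suc j) * d (Suc j) * \<phi> j)"
    unfolding Suc sum.lessThan_Suc_shift by simp
  also have "\<dots> = (\<Sum>j<B. of_nat (Suc j) * d (Suc j) * \<phi> j)"
    using assms unfolding Suc by simp
  finally show ?thesis .
qed simp

definition chain_sum :: "nat \<Rightarrow> complex set \<Rightarrow> nat \<Rightarrow> (nat \<Rightarrow> nat \<Rightarrow> complex \<Rightarrow> complex \<Rightarrow> complex)
    \<Rightarrow> (nat \<Rightarrow> complex \<Rightarrow> nat \<Rightarrow> complex) \<Rightarrow> complex \<Rightarrow> complex" where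
  "chain_sum r L B \<Phi> c x = (\<Sum>i<r. \<Sum>l\<in>L. \<Sum>j<B. c i l j * \<Phi> i j x l)"

definition chain_shift :: "complex \<Rightarrow> (nat \<Rightarrow> complex \<Rightarrow> nat \<Rightarrow> complex) \<Rightarrow> nat \<Rightarrow> complex \<Rightarrow> nat \<Rightarrow> complex" where
  "chain_shift \<mu> c i l j = (l - \<mu>) * c i l j + of_nat (Suc j) * c i l (Suc j)"

lemma chain_sum_eq_sum_product:
  "chain_sum r L B \<Phi> c x = (\<Sum>(i, l, j)\<in>{..<r} \<times> L \<times> {..<B}. c i l j * \<Phi> i j x l)"
  unfolding chain_sum_def by (simp add: sum.cartesian_product)

lemma chain_shift_neq_0D:
  assumes "chain_shift \<mu> c i l j \<noteq> 0"
  shows "c i l j \<noteq> 0 \<and> l \<noteq> \<mu> \<or> c i l (Suc j) \<noteq> 0"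
proof (rule ccontr)
  assume "\<not> (c i l j \<noteq> 0 \<and> l \<noteq> \<mu> \<or> c i l (Suc j) \<noteq> 0)"
  then have "(l - \<mu>) * c i l j = 0" "c i l (Suc j) = 0"
    by auto
  then show False
    using assms by (simp add: chain_shift_def)
qed

lemma chain_shift_eq_0D:
  assumes shift: "chain_shift \<mu> c = (\<lambda>_ _ _. 0)" and above: "\<And>i l j. j \<ge> B \<Longrightarrow> c i l j = 0"
  shows "l \<noteq> \<mu> \<Longrightarrow> c i l j = 0" and "c i \<mu> (Suc j) = 0"
proof -
  have eq: "(l - \<mu>) * c i l j + of_nat (Suc j) * c i l (Suc j) = 0" for i l j
    using fun_cong[OF fun_cong[OF fun_cong[OF shift, of i], of l], of j] by (simp only: chain_shift_def)
  show "c i \<mu> (Suc j) = 0"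
    using eq[where i=i and l=\<mu> and j=j] by (simp del: of_nat_Suc)
  assume l: "l \<noteq> \<mu>"
  show "c i l j = 0"
  proof (rule eq_0_by_descent[where f="c i l" and B=B])
    show "c i l k = 0" if "B \<le> k" for k
      using above that by blast
    show "c i l k = 0" if "c i l (Suc k) = 0" for k
      using eq[where i=i and l=l and j=k] that l by simp
  qed
qed

lemma chain_sum_eq_single_term:
  assumes L: "finite L" "\<mu> \<in> L" and B: "B > 0" and single: "\<And>i l j. c i l j \<noteq> 0 \<Longrightarrow> l = \<mu> \<and> j = 0"
  shows "chain_sum r L B \<Phi> c x = (\<Sum>i<r. c i \<mu> 0 * \<Phi> i 0 x \<mu>)"
  unfolding chain_sum_def
proof (intro sum.cong refl)
  fix i
  obtain B' where B': "B = Suc B'"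
    using B not0_implies_Suc by blast
  have "(\<Sum>j<B. c i l j * \<Phi> i j x l) = (if l = \<mu> then c i \<mu> 0 * \<Phi> i 0 x \<mu> else 0)" for l
  proof (cases "l = \<mu>")
    case True
    have "c i \<mu> (Suc j) = 0" for j
      using single by blast
    then show ?thesis
      using True unfolding B' sum.lessThan_Suc_shift by simp
  next
    case False
    then have "c i l j = 0" for j
      using single by blast
    then show ?thesis
      using False by simp
  qed
  then show "(\<Sum>l\<in>L. \<Sum>j<B. c i l j * \<Phi> i j x l) = c i \<mu> 0 * \<Phi> i 0 x \<mu>"
    using L by simp
qed

text \<open>
  For \<open>i < r\<close> and \<open>l \<in> V\<close>, the functions \<open>\<lambda>y. \<Phi> i j y l\<close> (\<open>j = 0, 1, \<dots>\<close>) form a Jordan chain of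
  the operator for the eigenvalue \<open>l\<close>; at \<open>j = 0\<close> the junk term \<open>\<Phi> i (0 - 1) = \<Phi> i 0\<close> is
  multiplied by \<open>0\<close>.
\<close>

locale eigenfunction_chains =
  fixes U V :: "complex set" and n r :: nat and a :: "nat \<Rightarrow> complex \<Rightarrow> complex"
    and \<Phi> :: "nat \<Rightarrow> nat \<Rightarrow> complex \<Rightarrow> complex \<Rightarrow> complex"
  assumes open_U: "open U"
    and holomorphic_chain: "\<And>i j l. i < r \<Longrightarrow> l \<in> V \<Longrightarrow> (\<lambda>y. \<Phi> i j y l) holomorphic_on U"
    and diff_op_chain: "\<And>i j x l. i < r \<Longrightarrow> x \<in> U \<Longrightarrow> l \<in> V \<Longrightarrow>
       diff_op n a (\<lambda>y. \<Phi> i j y l) x = l * \<Phi> i j x l + of_nat j * \<Phi> i (j - 1) x l"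
begin

lemma diff_op_chain_sum:
  assumes x: "x \<in> U" and L: "finite L" "L \<subseteq> V" and c: "\<And>i l. c i l B = 0"
  shows "diff_op n a (chain_sum r L B \<Phi> c) x - \<mu> * chain_sum r L B \<Phi> c x =
    chain_sum r L B \<Phi> (chain_shift \<mu> c) x"
proof -
  let ?S = "{..<r} \<times> L \<times> {..<B}"
  have "diff_op n a (chain_sum r L B \<Phi> c) x =
      (\<Sum>(i, l, j)\<in>?S. c i l j * diff_op n a (\<lambda>y. \<Phi> i j y l) x)"
    unfolding chain_sum_eq_sum_product[abs_def] case_prod_unfold
    using L holomorphic_chain by (intro diff_op_sum_cmult[OF open_U x]) auto
  also have "\<dots> = (\<Sum>(i, l, j)\<in>?S. c i l j * (l * \<Phi> i j x l + of_nat j * \<Phi> i (j - 1) x l))"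
    using L x by (intro sum.cong refl) (auto simp: diff_op_chain)
  finally have D: "diff_op n a (chain_sum r L B \<Phi> c) x =
      (\<Sum>(i, l, j)\<in>?S. c i l j * (l * \<Phi> i j x l + of_nat j * \<Phi> i (j - 1) x l))" .
  have "diff_op n a (chain_sum r L B \<Phi> c) x - \<mu> * chain_sum r L B \<Phi> c x =
      (\<Sum>(i, l, j)\<in>?S. (l - \<mu>) * c i l j * \<Phi> i j x l + of_nat j * c i l j * \<Phi> i (j - 1) x l)"
    unfolding D unfolding chain_sum_eq_sum_product sum_distrib_left sum_subtractf[symmetric]
    by (intro sum.cong refl) (auto simp: algebra_simps)
  also have "\<dots> = (\<Sum>i<r. \<Sum>l\<in>L. (\<Sum>j<B. (l - \<mu>) * c i l j * \<Phi> i j x l) +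
         (\<Sum>j<B. of_nat j * c i l j * \<Phi> i (j - 1) x l))"
    by (simp add: sum.cartesian_product[symmetric] sum.distrib)
  also have "\<dots> = chain_sum r L B \<Phi> (chain_shift \<mu> c) x"
    unfolding chain_sum_def chain_shift_def
  proof (intro sum.cong refl)
    fix i l
    show "(\<Sum>j<B. (l - \<mu>) * c i l j * \<Phi> i j x l) + (\<Sum>j<B. of_nat j * c i l j * \<Phi> i (j - 1) x l) =
        (\<Sum>j<B. ((l - \<mu>) * c i l j + of_nat (Suc j) * c i l (Suc j)) * \<Phi> i j x l)"
      unfolding sum_lessThan_of_nat_pred_shift[where d="c i l" and \<phi>="\<lambda>j. \<Phi> i j x l", OF c]
      by (simp add: sum.distrib[symmetric] distrib_right)
  qed
  finally show ?thesis .
qed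

lemma chain_sum_eq_0_imp_eigenvector_coeffs_eq_0:
  assumes indep: "\<And>l b. l \<in> V \<Longrightarrow> \<forall>x\<in>U. (\<Sum>i<r. b i * \<Phi> i 0 x l) = 0 \<Longrightarrow> \<forall>i<r. b i = 0"
    and L: "finite L" "L \<subseteq> V" and \<mu>: "\<mu> \<in> L" and B: "B > 0"
    and single: "\<And>i l j. c i l j \<noteq> 0 \<Longrightarrow> i < r \<and> l = \<mu> \<and> j = 0"
    and zero: "\<And>x. x \<in> U \<Longrightarrow> chain_sum r L B \<Phi> c x = 0"
  shows "c = (\<lambda>_ _ _. 0)"
proof -
  have "\<forall>i<r. c i \<mu> 0 = 0"
  proof (rule indep)
    show "\<mu> \<in> V"
      using L(2) \<mu> by blast
    have "l = \<mu> \<and> j = 0" if "c i l j \<noteq> 0" for i l j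
      using single[OF that] by simp
    then show "\<forall>x\<in>U. (\<Sum>i<r. c i \<mu> 0 * \<Phi> i 0 x \<mu>) = 0"
      using zero chain_sum_eq_single_term[where c=c, OF L(1) \<mu> B] by simp
  qed
  then show ?thesis
    using single by (fastforce simp: fun_eq_iff)
qed

lemma chain_sum_eq_0_imp_coeffs_eq_0:
  assumes indep: "\<And>l b. l \<in> V \<Longrightarrow> \<forall>x\<in>U. (\<Sum>i<r. b i * \<Phi> i 0 x l) = 0 \<Longrightarrow> \<forall>i<r. b i = 0"
    and L: "finite L" "L \<subseteq> V"
  shows "(\<And>i l j. c i l j \<noteq> 0 \<Longrightarrow> i < r \<and> l \<in> L \<and> j < m l) \<Longrightarrow> (\<And>l. l \<in> L \<Longrightarrow> m l \<le> B) \<Longrightarrow>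
    (\<And>x. x \<in> U \<Longrightarrow> chain_sum r L B \<Phi> c x = 0) \<Longrightarrow> c = (\<lambda>_ _ _. 0)"
proof (induction "sum m L" arbitrary: m c rule: less_induct)
  case less
  note supp = less.prems(1) and bound = less.prems(2) and zero = less.prems(3)
  show ?case
  proof (cases "\<exists>\<mu>\<in>L. m \<mu> > 0")
    case False
    then show ?thesis
      using supp by (fastforce simp: fun_eq_iff)
  next
    case True
    then obtain \<mu> where \<mu>: "\<mu> \<in> L" "m \<mu> > 0"
      by blast
    have above_B: "c i l j = 0" if "j \<ge> B" for i l j
      using supp[of i l j] bound that by fastforce
    have "sum (m(\<mu> := m \<mu> - 1)) L < sum m L"
      using \<mu> L(1) by (intro sum_strict_mono_ex1) auto
    moreover have "i < r \<and> l \<in> L \<and> j < (m(\<mu> := m \<mu> - 1)) l" if "chain_shift \<mu> c i l j \<noteq> 0" for i l j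
      using chain_shift_neq_0D[OF that] supp[of i l j] supp[of i l "Suc j"] by auto
    moreover have "(m(\<mu> := m \<mu> - 1)) l \<le> B" if "l \<in> L" for l
      using bound[OF that] by auto
    moreover have "chain_sum r L B \<Phi> (chain_shift \<mu> c) x = 0" if "x \<in> U" for x
      using diff_op_chain_sum[where c=c and \<mu>=\<mu>, OF that L above_B[OF order_refl]]
        diff_op_eq_0[OF open_U that zero] zero[OF that]
      by simp
    ultimately have "chain_shift \<mu> c = (\<lambda>_ _ _. 0)"
      by (rule less.hyps)
    note shift_0 = chain_shift_eq_0D[where c=c and B=B, OF this above_B]
    show ?thesis
    proof (rule chain_sum_eq_0_imp_eigenvector_coeffs_eq_0[where \<mu>=\<mu> and B=B])
      show "B > 0"
        using bound[OF \<mu>(1)] \<mu>(2) by linarith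
      show "i < r \<and> l = \<mu> \<and> j = 0" if "c i l j \<noteq> 0" for i l j
        using that supp[of i l j] shift_0(1)[where i=i and l=l and j=j] shift_0(2)[where i=i]
        by (cases j) auto
    qed (fact indep L \<mu>(1) zero)+
  qed
qed

end

lemma eigenfunction_chains_funpow_deriv_z:
  assumes U: "open U" and V: "open V" and hol: "\<And>i. i < r \<Longrightarrow> holomorphic2_on (psi i) U V"
    and eigen: "\<And>i x z. i < r \<Longrightarrow> x \<in> U \<Longrightarrow> z \<in> V \<Longrightarrow> diff_op n a (\<lambda>y. psi i y z) x = z * psi i x z"
  shows "eigenfunction_chains U V n r a (\<lambda>i j. (deriv_z ^^ j) (psi i))"
proof
  show "open U" by (rule U)
  fix i j l assume i: "i < r" and l: "l \<in> V"
  show "(\<lambda>y. (deriv_z ^^ j) (psi i) y l) holomorphic_on U"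
    using holomorphic2_on_funpow_deriv_z[OF hol[OF i] U V] l by (simp add: holomorphic2_on_def)
  fix x assume x: "x \<in> U"
  show "diff_op n a (\<lambda>y. (deriv_z ^^ j) (psi i) y l) x =
      l * (deriv_z ^^ j) (psi i) x l + of_nat j * (deriv_z ^^ (j - 1)) (psi i) x l"
    using diff_op_funpow_deriv_z[OF hol[OF i] U V, of n a, OF eigen[OF i] x l] .
qed

section \<open>Finitely supported distributions\<close>

lemma dist_apply_eq_sum_superset:
  assumes "finite S" "{(l, j). c l j \<noteq> 0} \<subseteq> S"
  shows "dist_apply c psi x = (\<Sum>(l, j)\<in>S. c l j * (deriv ^^ j) (psi x) l)"
  unfolding dist_apply_def using assms by (intro sum.mono_neutral_left) auto

lemma dist_apply_diff:
  assumes "fsupp_dist c" "fsupp_dist d"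
  shows "dist_apply (\<lambda>l j. c l j - d l j) psi x = dist_apply c psi x - dist_apply d psi x"
proof -
  define S where "S = {(l, j). c l j \<noteq> 0} \<union> {(l, j). d l j \<noteq> 0}"
  have S: "finite S"
    using assms unfolding S_def fsupp_dist_def by blast
  have "dist_apply (\<lambda>l j. c l j - d l j) psi x = (\<Sum>(l, j)\<in>S. (c l j - d l j) * (deriv ^^ j) (psi x) l)"
    by (rule dist_apply_eq_sum_superset[OF S]) (auto simp: S_def)
  also have "\<dots> = dist_apply c psi x - dist_apply d psi x"
    by (simp add: dist_apply_eq_sum_superset[OF S] S_def left_diff_distrib sum_subtractf case_prod_unfold)
  finally show ?thesis .
qed

lemma dist_space_diff:
  assumes "c \<in> dist_space V" "d \<in> dist_space V"
  shows "(\<lambda>l j. c l j - d l j) \<in> dist_space V"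
proof -
  have "{(l, j). c l j - d l j \<noteq> 0} \<subseteq> {(l, j). c l j \<noteq> 0} \<union> {(l, j). d l j \<noteq> 0}"
    by auto
  then have "fsupp_dist (\<lambda>l j. c l j - d l j)"
    using assms unfolding dist_space_def fsupp_dist_def by (auto intro: finite_subset)
  moreover have "dist_support (\<lambda>l j. c l j - d l j) \<subseteq> V"
  proof
    fix l assume "l \<in> dist_support (\<lambda>l j. c l j - d l j)"
    then obtain j where "c l j \<noteq> 0 \<or> d l j \<noteq> 0"
      by (force simp: dist_support_def)
    then show "l \<in> V"
      using assms by (auto simp: dist_space_def dist_support_def)
  qed
  ultimately show ?thesis
    by (simp add: dist_space_def)
qed

lemma dist_space_family_support:
  fixes c :: "nat \<Rightarrow> complex \<Rightarrow> nat \<Rightarrow> complex"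
  assumes "\<And>i. i < r \<Longrightarrow> c i \<in> dist_space V"
  obtains L B where "finite L" "L \<subseteq> V" "\<And>i l j. i < r \<Longrightarrow> c i l j \<noteq> 0 \<Longrightarrow> l \<in> L \<and> j < (B :: nat)"
proof -
  define S where "S = (\<Union>i<r. {(l, j). c i l j \<noteq> 0})"
  have S: "(l, j) \<in> S" if "i < r" "c i l j \<noteq> 0" for i l j
    unfolding S_def using that by blast
  have "finite S"
    unfolding S_def using assms by (auto simp: dist_space_def fsupp_dist_def)
  then obtain B where B: "snd ` S \<subseteq> {..<B}"
    using finite_nat_bounded[of "snd ` S"] by blast
  show ?thesis
  proof (rule that[of "fst ` S" B])
    show "finite (fst ` S)"
      using \<open>finite S\<close> by simp
    show "fst ` S \<subseteq> V"
      using assms unfolding S_def dist_space_def dist_support_def by force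
    fix i l j assume "i < r" "c i l j \<noteq> 0"
    then have "(l, j) \<in> S" by (rule S)
    then show "l \<in> fst ` S \<and> j < B"
      using B by (metis fst_conv snd_conv image_eqI lessThan_iff subsetD)
  qed
qed

lemma sum_dist_apply_eq_chain_sum:
  assumes L: "finite L" and supp: "\<And>i l j. i < r \<Longrightarrow> c i l j \<noteq> 0 \<Longrightarrow> l \<in> L \<and> j < B"
  shows "(\<Sum>i<r. dist_apply (c i) (psi i) x) = chain_sum r L B (\<lambda>i j. (deriv_z ^^ j) (psi i)) c x"
  unfolding chain_sum_def funpow_deriv_z_eq_higher_deriv
proof (intro sum.cong refl)
  fix i assume "i \<in> {..<r}"
  then have "dist_apply (c i) (psi i) x = (\<Sum>(l, j)\<in>L \<times> {..<B}. c i l j * (deriv ^^ j) (psi i x) l)"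
    using L supp by (intro dist_apply_eq_sum_superset) auto
  then show "dist_apply (c i) (psi i) x = (\<Sum>l\<in>L. \<Sum>j<B. c i l j * (deriv ^^ j) (psi i x) l)"
    by (simp add: sum.cartesian_product)
qed

lemma sum_dist_apply_eq_0_imp_eq_0:
  fixes psi :: "nat \<Rightarrow> complex \<Rightarrow> complex \<Rightarrow> complex"
  assumes U: "open U" and V: "open V"
    and psi_hol: "\<And>i. i < r \<Longrightarrow> holomorphic2_on (psi i) U V"
    and eigen: "\<And>i x z. i < r \<Longrightarrow> x \<in> U \<Longrightarrow> z \<in> V \<Longrightarrow> diff_op n a (\<lambda>y. psi i y z) x = z * psi i x z"
    and indep: "\<And>l b. l \<in> V \<Longrightarrow> \<forall>x\<in>U. (\<Sum>i<r. b i * psi i x l) = 0 \<Longrightarrow> \<forall>i<r. b i = 0"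
    and c: "\<And>i. i < r \<Longrightarrow> c i \<in> dist_space V" "\<And>i. i \<ge> r \<Longrightarrow> c i = (\<lambda>_ _. 0)"
    and zero: "\<And>x. x \<in> U \<Longrightarrow> (\<Sum>i<r. dist_apply (c i) (psi i) x) = 0"
  shows "c = (\<lambda>_ _ _. 0)"
proof -
  obtain L B where L: "finite L" "L \<subseteq> V" and box: "\<And>i l j. i < r \<Longrightarrow> c i l j \<noteq> 0 \<Longrightarrow> l \<in> L \<and> j < B"
    using dist_space_family_support[of r c V] c(1) by blast
  interpret eigenfunction_chains U V n r a "\<lambda>i j. (deriv_z ^^ j) (psi i)"
    by (rule eigenfunction_chains_funpow_deriv_z[OF U V psi_hol eigen])
  show ?thesis
  proof (rule chain_sum_eq_0_imp_coeffs_eq_0[OF _ L, where m="\<lambda>_. B"])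
    show "\<forall>i<r. b i = 0" if "l \<in> V" "\<forall>x\<in>U. (\<Sum>i<r. b i * (deriv_z ^^ 0) (psi i) x l) = 0" for l b
      using indep that by simp
    show "i < r \<and> l \<in> L \<and> j < B" if "c i l j \<noteq> 0" for i l j
      using box[of i l j] c(2)[of i] that by (cases "i < r") auto
    show "chain_sum r L B (\<lambda>i j. (deriv_z ^^ j) (psi i)) c x = 0" if "x \<in> U" for x
      using zero[OF that] sum_dist_apply_eq_chain_sum[OF L(1) box] by simp
  qed simp
qed

theorem mainTheorem3:
  fixes U V :: "complex set" and r :: nat
    and a :: "nat \<Rightarrow> complex \<Rightarrow> complex"
    and psi :: "nat \<Rightarrow> complex \<Rightarrow> complex \<Rightarrow> complex"
  assumes U_open: "open U" and U_ne: "U \<noteq> {}"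
    and V_open: "open V"
    and a_hol: "\<And>k. k \<le> r \<Longrightarrow> a k holomorphic_on U"
    and order_r: "\<exists>x\<in>U. a r x \<noteq> 0"
    and psi_hol: "\<And>i. i < r \<Longrightarrow> holomorphic2_on (psi i) U V"
    and eigen: "\<And>i x z. i < r \<Longrightarrow> x \<in> U \<Longrightarrow> z \<in> V \<Longrightarrow>
                   diff_op r a (\<lambda>y. psi i y z) x = z * psi i x z"
    and indep: "\<And>lam b. lam \<in> V \<Longrightarrow> (\<forall>x\<in>U. (\<Sum>i<r. b i * psi i x lam) = 0) \<Longrightarrow>
                   (\<forall>i<r. b i = 0)"
  shows "inj_on (\<lambda>cs. restrict (\<lambda>x. \<Sum>i<r. dist_apply (cs i) (psi i) x) U)
           {cs :: nat \<Rightarrow> complex \<Rightarrow> nat \<Rightarrow> complex.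
              (\<forall>i<r. cs i \<in> dist_space V) \<and> (\<forall>i\<ge>r. cs i = (\<lambda>_ _. 0))}"
proof (rule inj_onI)
  fix cs ds
  assume cs: "cs \<in> {cs. (\<forall>i<r. cs i \<in> dist_space V) \<and> (\<forall>i\<ge>r. cs i = (\<lambda>_ _. 0))}"
    and ds: "ds \<in> {cs. (\<forall>i<r. cs i \<in> dist_space V) \<and> (\<forall>i\<ge>r. cs i = (\<lambda>_ _. 0))}"
    and eq: "restrict (\<lambda>x. \<Sum>i<r. dist_apply (cs i) (psi i) x) U =
      restrict (\<lambda>x. \<Sum>i<r. dist_apply (ds i) (psi i) x) U"
  have "(\<lambda>i l j. cs i l j - ds i l j) = (\<lambda>_ _ _. 0)"
  proof (rule sum_dist_apply_eq_0_imp_eq_0[OF U_open V_open psi_hol eigen indep])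
    show "(\<lambda>l j. cs i l j - ds i l j) \<in> dist_space V" if "i < r" for i
      using cs ds that by (auto intro: dist_space_diff)
    show "(\<lambda>l j. cs i l j - ds i l j) = (\<lambda>_ _. 0)" if "i \<ge> r" for i
      using cs ds that by auto
    show "(\<Sum>i<r. dist_apply (\<lambda>l j. cs i l j - ds i l j) (psi i) x) = 0" if "x \<in> U" for x
      using fun_cong[OF eq, of x] that cs ds by (simp add: dist_apply_diff dist_space_def sum_subtractf)
  qed
  then show "cs = ds"
    by (simp add: fun_eq_iff)
qed

end
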